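(* Let $\varphi$ be an IPDL-formula all of whose propositional variables are among $p_1,\ldots,p_n$ and all of whose atomic program terms are among $a_1,\ldots,a_l$ ($l\ge 1$). Let $\gamma = a_1\cup\cdots\cup a_l$, let $\cdot'$ be the translation defined in the context (which uses the fresh variable $p_{n+1}$), let $$\Theta = p_{n+1}\wedge [\gamma^*](\langle\gamma\rangle p_{n+1}\rightarrow p_{n+1}),$$ and let $\widehat{\varphi} = \Theta\wedge\varphi'$. Then $\varphi$ is satisfiable if, and only if, $\widehat{\varphi}$ is satisfiable.
   Context: Fix a countable set $\mathit{Var}=\{p_1,p_2,\ldots\}$ of propositional variables and a countable set $AP=\{a_1,a_2,\ldots\}$ of atomic program terms. IPDL formulas $\varphi$ and program terms $\alpha$ are defined simultaneously by $\varphi ::= p \mid \bot \mid (\varphi\rightarrow\varphi)\mid [\alpha]\varphi$ and $\alpha ::= a \mid \varphi? \mid (\alpha;\alpha)\mid(\alpha\cup\alpha)\mid(\alpha\cap\alpha)\mid \alpha^*$, where $p\in\mathit{Var}$, $a\in AP$. The connectives $\neg,\wedge,\vee,\leftrightarrow,\top$ are defined as usual and $\langle\alpha\rangle\psi=\neg[\alpha]\neg\psi$. A Kripke model is $\mathfrak{M}=(S,\{R_a\}_{a\in AP},V)$ with $S$ a nonempty set, each $R_a\subseteq S\times S$, and $V:\mathit{Var}\to 2^S$. Relations for compound programs and the satisfaction relation are defined simultaneously: $(s,t)\in R_{\psi?}$ iff $s=t$ and $\mathfrak{M},s\models\psi$; $R_{\alpha;\beta}$ is the relational composition of $R_\alpha$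 and $R_\beta$; $R_{\alpha\cup\beta}=R_\alpha\cup R_\beta$; $R_{\alpha\cap\beta}=R_\alpha\cap R_\beta$; $R_{\alpha^*}$ is the reflexive transitive closure of $R_\alpha$; $\mathfrak{M},s\models p$ iff $s\in V(p)$; $\mathfrak{M},s\not\models\bot$; $\mathfrak{M},s\models\psi\rightarrow\chi$ iff $\mathfrak{M},s\models\psi$ implies $\mathfrak{M},s\models\chi$; $\mathfrak{M},s\models[\alpha]\psi$ iff $\mathfrak{M},t\models\psi$ for all $t$ with $(s,t)\in R_\alpha$. A formula is satisfiable if it is true at some state of some model. The translation $\cdot'$ (for $\varphi$ as in the claim) is defined recursively: $a_j'=a_j$; $(\alpha;\beta)'=\alpha';\beta'$; $(\alpha\cup\beta)'=\alpha'\cup\beta'$; $(\alpha\cap\beta)'=\alpha'\cap\beta'$; $(\alpha^* )'=(\alpha')^*$; $(\psi?)'=(\psi')?$; $p_i'=p_i$ for $i\le n$; $\bot'=\bot$; $(\psi\rightarrow\chi)'=\psi'\rightarrow\chi'$; $([\alpha]\psi)'=[\alpha'](p_{n+1}\rightarrow\psi')$. *)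

theory Defs
  imports Main
begin

text \<open>Propositional variable p_i is Var i, atomic program a_j is Atom j (indices in nat).\<close>

datatype fm = Var nat | Bot | Imp fm fm | Box prog fm
and prog = Atom nat | Test fm | Seq prog prog | Union prog prog | Inter prog prog | Star prog

definition Neg :: "fm \<Rightarrow> fm" where "Neg \<phi> = Imp \<phi> Bot"
definition And :: "fm \<Rightarrow> fm \<Rightarrow> fm" where "And \<phi> \<psi> = Neg (Imp \<phi> (Neg \<psi>))"
definition Dia :: "prog \<Rightarrow> fm \<Rightarrow> fm" where "Dia \<alpha> \<phi> = Neg (Box \<alpha> (Neg \<phi>))"

record 's kmodel =
  St :: "'s set"
  R :: "nat \<Rightarrow> ('s \<times> 's) set"
  V :: "nat \<Rightarrow> 's set"

definition is_model :: "('s, 'x) kmodel_scheme \<Rightarrow> bool" where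
  "is_model M \<longleftrightarrow> St M \<noteq> {} \<and> (\<forall>a. R M a \<subseteq> St M \<times> St M) \<and> (\<forall>p. V M p \<subseteq> St M)"

fun sat :: "'s kmodel \<Rightarrow> 's \<Rightarrow> fm \<Rightarrow> bool"
and rel :: "'s kmodel \<Rightarrow> prog \<Rightarrow> ('s \<times> 's) set" where
  "sat M s (Var p) = (s \<in> V M p)"
| "sat M s Bot = False"
| "sat M s (Imp \<psi> \<chi>) = (sat M s \<psi> \<longrightarrow> sat M s \<chi>)"
| "sat M s (Box \<alpha> \<psi>) = (\<forall>t. (s, t) \<in> rel M \<alpha> \<longrightarrow> sat M t \<psi>)"
| "rel M (Atom a) = R M a"
| "rel M (Test \<psi>) = {(s, s) | s. s \<in> St M \<and> sat M s \<psi>}"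
| "rel M (Seq \<alpha> \<beta>) = rel M \<alpha> O rel M \<beta>"
| "rel M (Union \<alpha> \<beta>) = rel M \<alpha> \<union> rel M \<beta>"
| "rel M (Inter \<alpha> \<beta>) = rel M \<alpha> \<inter> rel M \<beta>"
| "rel M (Star \<alpha>) = Id_on (St M) \<union> (rel M \<alpha>)\<^sup>+"

definition satisfiable :: "'s itself \<Rightarrow> fm \<Rightarrow> bool" where
  "satisfiable _ \<phi> \<longleftrightarrow> (\<exists>(M :: 's kmodel) s. is_model M \<and> s \<in> St M \<and> sat M s \<phi>)"

fun vars :: "fm \<Rightarrow> nat set" and pvars :: "prog \<Rightarrow> nat set" where
  "vars (Var p) = {p}"
| "vars Bot = {}"
| "vars (Imp \<psi> \<chi>) = vars \<psi> \<union> vars \<chi>"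
| "vars (Box \<alpha> \<psi>) = pvars \<alpha> \<union> vars \<psi>"
| "pvars (Atom a) = {}"
| "pvars (Test \<psi>) = vars \<psi>"
| "pvars (Seq \<alpha> \<beta>) = pvars \<alpha> \<union> pvars \<beta>"
| "pvars (Union \<alpha> \<beta>) = pvars \<alpha> \<union> pvars \<beta>"
| "pvars (Inter \<alpha> \<beta>) = pvars \<alpha> \<union> pvars \<beta>"
| "pvars (Star \<alpha>) = pvars \<alpha>"

fun atoms :: "fm \<Rightarrow> nat set" and patoms :: "prog \<Rightarrow> nat set" where
  "atoms (Var p) = {}"
| "atoms Bot = {}"
| "atoms (Imp \<psi> \<chi>) = atoms \<psi> \<union> atoms \<chi>"
| "atoms (Box \<alpha> \<psi>) = patoms \<alpha> \<union> atoms \<psi>"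
| "patoms (Atom a) = {a}"
| "patoms (Test \<psi>) = atoms \<psi>"
| "patoms (Seq \<alpha> \<beta>) = patoms \<alpha> \<union> patoms \<beta>"
| "patoms (Union \<alpha> \<beta>) = patoms \<alpha> \<union> patoms \<beta>"
| "patoms (Inter \<alpha> \<beta>) = patoms \<alpha> \<union> patoms \<beta>"
| "patoms (Star \<alpha>) = patoms \<alpha>"

fun gamma :: "nat \<Rightarrow> prog" where
  "gamma 0 = Test Bot"
| "gamma (Suc 0) = Atom 1"
| "gamma (Suc (Suc k)) = Union (gamma (Suc k)) (Atom (Suc (Suc k)))"

fun tr :: "nat \<Rightarrow> fm \<Rightarrow> fm" and ptr :: "nat \<Rightarrow> prog \<Rightarrow> prog" where
  "tr n (Var p) = Var p"
| "tr n Bot = Bot"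
| "tr n (Imp \<psi> \<chi>) = Imp (tr n \<psi>) (tr n \<chi>)"
| "tr n (Box \<alpha> \<psi>) = Box (ptr n \<alpha>) (Imp (Var (n + 1)) (tr n \<psi>))"
| "ptr n (Atom a) = Atom a"
| "ptr n (Test \<psi>) = Test (tr n \<psi>)"
| "ptr n (Seq \<alpha> \<beta>) = Seq (ptr n \<alpha>) (ptr n \<beta>)"
| "ptr n (Union \<alpha> \<beta>) = Union (ptr n \<alpha>) (ptr n \<beta>)"
| "ptr n (Inter \<alpha> \<beta>) = Inter (ptr n \<alpha>) (ptr n \<beta>)"
| "ptr n (Star \<alpha>) = Star (ptr n \<alpha>)"

definition Theta :: "nat \<Rightarrow> nat \<Rightarrow> fm" where
  "Theta n l = And (Var (n + 1))
     (Box (Star (gamma l)) (Imp (Dia (gamma l) (Var (n + 1))) (Var (n + 1))))"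

definition hat :: "nat \<Rightarrow> nat \<Rightarrow> fm \<Rightarrow> fm" where
  "hat n l \<phi> = And (Theta n l) (tr n \<phi>)"

end

theory Submission
  imports Defs
begin

(* If p_(n+1) is made true everywhere, the translation is harmless and Theta holds trivially.
   Conversely, Theta says that p_(n+1) holds at the root and is closed backwards along
   gamma-paths starting there. Hence the set P of gamma-reachable p_(n+1)-states is convex:
   a gamma-path between two states of P stays inside P. Translated programs only move along
   gamma-paths, so on P the guard p_(n+1) means membership in P, and restricting the model
   to P turns phi' at the root into phi. *)

lemma sat_Neg [simp]: "sat M s (Neg \<phi>) \<longleftrightarrow> \<not> sat M s \<phi>"
  by (simp add: Neg_def)

lemma sat_And [simp]: "sat M s (And \<phi> \<psi>) \<longleftrightarrow> sat M s \<phi> \<and> sat M s \<psi>"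
  by (simp add: And_def)

lemma sat_Dia [simp]: "sat M s (Dia \<alpha> \<phi>) \<longleftrightarrow> (\<exists>t. (s, t) \<in> rel M \<alpha> \<and> sat M t \<phi>)"
  by (simp add: Dia_def)

lemma rel_subset_St:
  assumes "\<And>a. R M a \<subseteq> St M \<times> St M"
  shows "rel M \<alpha> \<subseteq> St M \<times> St M"
proof (induction \<alpha>)
  case (Star \<alpha>)
  then show ?case using trancl_subset_Sigma[of "rel M \<alpha>" "St M"] by auto
qed (use assms in auto)

lemma rel_Star_from_state:
  "s \<in> St M \<Longrightarrow> (s, t) \<in> rel M (Star \<alpha>) \<longleftrightarrow> (s, t) \<in> (rel M \<alpha>)\<^sup>*"
  by (auto simp: rtrancl_eq_or_trancl)

lemma rel_gamma: "l \<ge> 1 \<Longrightarrow> rel M (gamma l) = (\<Union>a\<in>{1..l}. R M a)"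
proof (induction l rule: gamma.induct)
  case (3 k)
  have "{1..Suc (Suc k)} = insert (Suc (Suc k)) {1..Suc k}" by auto
  with 3 show ?case by auto
qed auto

lemma sat_update_fresh_var:
  "p \<notin> vars \<psi> \<Longrightarrow> sat (M\<lparr>V := (V M)(p := X)\<rparr>) s \<psi> \<longleftrightarrow> sat M s \<psi>"
  "p \<notin> pvars \<alpha> \<Longrightarrow> rel (M\<lparr>V := (V M)(p := X)\<rparr>) \<alpha> = rel M \<alpha>"
  by (induction \<psi> and \<alpha> arbitrary: s and) auto

lemma sat_tr_if_guard_holds_everywhere:
  assumes "is_model M" and "St M \<subseteq> V M (n + 1)"
  shows "sat M s (tr n \<psi>) \<longleftrightarrow> sat M s \<psi>" and "rel M (ptr n \<alpha>) = rel M \<alpha>"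
proof (induction \<psi> and \<alpha> arbitrary: s and)
  case (Box \<alpha> \<psi>)
  have "(s, t) \<in> rel M \<alpha> \<Longrightarrow> t \<in> V M (n + 1)" for t
    using rel_subset_St[of M \<alpha>] assms by (auto simp: is_model_def)
  with Box show ?case by auto
qed auto

lemma satisfiable_hat_if_satisfiable:
  assumes "vars \<phi> \<subseteq> {1..n}" and "satisfiable TYPE('s) \<phi>"
  shows "satisfiable TYPE('s) (hat n l \<phi>)"
proof -
  obtain M :: "'s kmodel" and s where M: "is_model M" "s \<in> St M" "sat M s \<phi>"
    using assms(2) unfolding satisfiable_def by blast
  define M' where "M' = M\<lparr>V := (V M)(n + 1 := St M)\<rparr>"
  have M': "is_model M'" "St M' = St M" "V M' (n + 1) = St M"
    using M(1) by (auto simp: M'_def is_model_def)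
  have "n + 1 \<notin> vars \<phi>" using assms(1) by auto
  then have "sat M' s \<phi>" using M(3) by (simp add: M'_def sat_update_fresh_var)
  then have "sat M' s (tr n \<phi>)" using sat_tr_if_guard_holds_everywhere(1)[OF M'(1)] M' by simp
  moreover have "sat M' s (Theta n l)"
    using M(2) M' rel_subset_St[of M' "Star (gamma l)"] by (auto simp: Theta_def is_model_def)
  ultimately show ?thesis
    using M' M(2) unfolding satisfiable_def hat_def by auto
qed

definition path_convex :: "('s \<times> 's) set \<Rightarrow> 's set \<Rightarrow> bool" where
  "path_convex G P \<longleftrightarrow> (\<forall>x\<in>P. \<forall>y\<in>P. \<forall>z. (x, z) \<in> G\<^sup>* \<and> (z, y) \<in> G\<^sup>* \<longrightarrow> z \<in> P)"

lemma path_convexD: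
  "path_convex G P \<Longrightarrow> x \<in> P \<Longrightarrow> y \<in> P \<Longrightarrow> (x, z) \<in> G\<^sup>* \<Longrightarrow> (z, y) \<in> G\<^sup>* \<Longrightarrow> z \<in> P"
  unfolding path_convex_def by blast

lemma path_convex_reachable_backward_closed:
  assumes "\<And>u t. (s, u) \<in> G\<^sup>* \<Longrightarrow> (u, t) \<in> G \<Longrightarrow> t \<in> Q \<Longrightarrow> u \<in> Q"
  shows "path_convex G {t. (s, t) \<in> G\<^sup>* \<and> t \<in> Q}"
proof -
  have "z \<in> Q" if "(z, y) \<in> G\<^sup>*" "(s, z) \<in> G\<^sup>*" "y \<in> Q" for y z
    using that
  proof (induction rule: converse_rtrancl_induct)
    case (step z z')
    then show ?case using assms by (blast intro: rtrancl_into_rtrancl)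
  qed
  then show ?thesis unfolding path_convex_def by (blast intro: rtrancl_trans)
qed

lemma relcomp_eq_on_path_convex:
  assumes "path_convex G P" and "A \<subseteq> P \<times> P" and "B \<subseteq> G\<^sup>*" and "B' \<subseteq> G\<^sup>*"
    and "\<And>x y. x \<in> P \<Longrightarrow> y \<in> P \<Longrightarrow> (x, y) \<in> A \<longleftrightarrow> (x, y) \<in> B"
    and "\<And>x y. x \<in> P \<Longrightarrow> y \<in> P \<Longrightarrow> (x, y) \<in> A' \<longleftrightarrow> (x, y) \<in> B'"
    and "x \<in> P" and "y \<in> P"
  shows "(x, y) \<in> A O A' \<longleftrightarrow> (x, y) \<in> B O B'"
proof
  assume "(x, y) \<in> A O A'"
  then obtain z where "(x, z) \<in> A" "(z, y) \<in> A'" by blast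
  with assms show "(x, y) \<in> B O B'" by blast
next
  assume "(x, y) \<in> B O B'"
  then obtain z where z: "(x, z) \<in> B" "(z, y) \<in> B'" by blast
  then have "z \<in> P" using path_convexD[OF assms(1,7,8)] assms(3,4) by blast
  with z assms show "(x, y) \<in> A O A'" by blast
qed

lemma trancl_eq_on_path_convex:
  assumes "path_convex G P" and "A \<subseteq> P \<times> P" and "B \<subseteq> G\<^sup>*"
    and agree: "\<And>x y. x \<in> P \<Longrightarrow> y \<in> P \<Longrightarrow> (x, y) \<in> A \<longleftrightarrow> (x, y) \<in> B"
    and "x \<in> P" and "y \<in> P"
  shows "(x, y) \<in> A\<^sup>+ \<longleftrightarrow> (x, y) \<in> B\<^sup>+"
proof
  assume "(x, y) \<in> A\<^sup>+"
  then show "(x, y) \<in> B\<^sup>+"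
  proof (induction rule: trancl_induct)
    case (base y)
    then show ?case using assms by blast
  next
    case (step y z)
    then have "(y, z) \<in> B" using assms(2) agree by blast
    with step.IH show ?case by (rule trancl_into_trancl)
  qed
next
  have B_trancl: "B\<^sup>+ \<subseteq> G\<^sup>*"
    using rtrancl_mono[OF assms(3)] by (auto dest: trancl_into_rtrancl)
  assume "(x, y) \<in> B\<^sup>+"
  then show "(x, y) \<in> A\<^sup>+" using \<open>y \<in> P\<close>
  proof (induction rule: trancl_induct)
    case (base y)
    then show ?case using assms by blast
  next
    case (step y z)
    have "y \<in> P"
      using path_convexD[OF assms(1,5) step.prems] step.hyps B_trancl assms(3) by blast
    with step show ?case using agree by (blast intro: trancl_into_trancl)
  qed
qed

definition restrict_model :: "'s kmodel \<Rightarrow> 's set \<Rightarrow> 's kmodel" where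
  "restrict_model M P = \<lparr>St = P, R = (\<lambda>a. R M a \<inter> P \<times> P), V = (\<lambda>p. V M p \<inter> P)\<rparr>"

lemma restrict_model_simps [simp]:
  "St (restrict_model M P) = P"
  "R (restrict_model M P) a = R M a \<inter> P \<times> P"
  "V (restrict_model M P) p = V M p \<inter> P"
  by (simp_all add: restrict_model_def)

lemma rel_restrict_model_subset: "rel (restrict_model M P) \<alpha> \<subseteq> P \<times> P"
  using rel_subset_St[of "restrict_model M P"] by auto

lemma is_model_restrict_model: "P \<noteq> {} \<Longrightarrow> is_model (restrict_model M P)"
  by (auto simp: is_model_def)

lemma sat_restrict_model_tr:
  assumes M: "is_model M" and convex: "path_convex G P"
    and R_G: "\<And>a. a \<in> A \<Longrightarrow> R M a \<subseteq> G"
    and marked: "\<And>x t. x \<in> P \<Longrightarrow> (x, t) \<in> G\<^sup>* \<Longrightarrow> t \<in> P \<longleftrightarrow> t \<in> V M (n + 1)"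
  shows "atoms \<psi> \<subseteq> A \<Longrightarrow> x \<in> P \<Longrightarrow> sat (restrict_model M P) x \<psi> \<longleftrightarrow> sat M x (tr n \<psi>)"
    and "patoms \<alpha> \<subseteq> A \<Longrightarrow> rel M (ptr n \<alpha>) \<subseteq> G\<^sup>* \<and>
      (\<forall>x\<in>P. \<forall>y\<in>P. (x, y) \<in> rel (restrict_model M P) \<alpha> \<longleftrightarrow> (x, y) \<in> rel M (ptr n \<alpha>))"
proof -
  let ?N = "restrict_model M P"
  have "x \<in> V M (n + 1)" if "x \<in> P" for x
    using marked[of x x] that by blast
  then have P_St: "P \<subseteq> St M"
    using M unfolding is_model_def by blast
  show "atoms \<psi> \<subseteq> A \<Longrightarrow> x \<in> P \<Longrightarrow> sat ?N x \<psi> \<longleftrightarrow> sat M x (tr n \<psi>)"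
    and "patoms \<alpha> \<subseteq> A \<Longrightarrow> rel M (ptr n \<alpha>) \<subseteq> G\<^sup>* \<and>
      (\<forall>x\<in>P. \<forall>y\<in>P. (x, y) \<in> rel ?N \<alpha> \<longleftrightarrow> (x, y) \<in> rel M (ptr n \<alpha>))"
  proof (induction \<psi> and \<alpha> arbitrary: x and)
    case (Box \<alpha> \<psi>)
    then have \<alpha>: "rel M (ptr n \<alpha>) \<subseteq> G\<^sup>*"
      "\<And>y. y \<in> P \<Longrightarrow> (x, y) \<in> rel ?N \<alpha> \<longleftrightarrow> (x, y) \<in> rel M (ptr n \<alpha>)"
      and \<psi>: "\<And>y. y \<in> P \<Longrightarrow> sat ?N y \<psi> \<longleftrightarrow> sat M y (tr n \<psi>)"
      by auto
    have "sat ?N x (Box \<alpha> \<psi>) \<longleftrightarrow> (\<forall>t\<in>P. (x, t) \<in> rel M (ptr n \<alpha>) \<longrightarrow> sat M t (tr n \<psi>))"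
      using \<alpha>(2) \<psi> rel_restrict_model_subset[of M P \<alpha>] by auto
    also have "\<dots> \<longleftrightarrow> sat M x (tr n (Box \<alpha> \<psi>))"
      using marked[OF Box.prems(2)] \<alpha>(1) by auto
    finally show ?case .
  next
    case (Test \<psi>)
    then show ?case using P_St by auto
  next
    case (Seq \<alpha> \<beta>)
    then have "rel M (ptr n (Seq \<alpha> \<beta>)) \<subseteq> G\<^sup>*" by (auto intro: rtrancl_trans)
    moreover have "(x, y) \<in> rel ?N (Seq \<alpha> \<beta>) \<longleftrightarrow> (x, y) \<in> rel M (ptr n (Seq \<alpha> \<beta>))"
      if "x \<in> P" "y \<in> P" for x y
      using relcomp_eq_on_path_convex[OF convex rel_restrict_model_subset] Seq that by simp
    ultimately show ?case by blast
  next
    case (Star \<alpha>)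
    then have "rel M (ptr n (Star \<alpha>)) \<subseteq> G\<^sup>*"
      using rtrancl_mono[of "rel M (ptr n \<alpha>)" "G\<^sup>*"] by (auto dest: trancl_into_rtrancl)
    moreover have "(x, y) \<in> rel ?N (Star \<alpha>) \<longleftrightarrow> (x, y) \<in> rel M (ptr n (Star \<alpha>))"
      if "x \<in> P" "y \<in> P" for x y
      using trancl_eq_on_path_convex[OF convex rel_restrict_model_subset] Star that P_St by auto
    ultimately show ?case by blast
  qed (use R_G in auto)
qed

lemma satisfiable_if_satisfiable_hat:
  assumes "atoms \<phi> \<subseteq> {1..l}" and "l \<ge> 1" and "satisfiable TYPE('s) (hat n l \<phi>)"
  shows "satisfiable TYPE('s) \<phi>"
proof -
  obtain M :: "'s kmodel" and s where M: "is_model M" "s \<in> St M" "sat M s (hat n l \<phi>)"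
    using assms(3) unfolding satisfiable_def by blast
  define G where "G = rel M (gamma l)"
  define P where "P = {t. (s, t) \<in> G\<^sup>* \<and> t \<in> V M (n + 1)}"
  have "s \<in> V M (n + 1)"
    and backward_closed:
      "\<And>u t. (s, u) \<in> G\<^sup>* \<Longrightarrow> (u, t) \<in> G \<Longrightarrow> t \<in> V M (n + 1) \<Longrightarrow> u \<in> V M (n + 1)"
    and \<phi>': "sat M s (tr n \<phi>)"
    using M(2,3) by (auto simp: hat_def Theta_def G_def rel_Star_from_state simp del: rel.simps)
  then have "s \<in> P" by (simp add: P_def)
  have convex: "path_convex G P"
    unfolding P_def using backward_closed by (rule path_convex_reachable_backward_closed)
  have R_G: "\<And>a. a \<in> {1..l} \<Longrightarrow> R M a \<subseteq> G"
    unfolding G_def rel_gamma[OF assms(2)] by auto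
  have marked: "\<And>x t. x \<in> P \<Longrightarrow> (x, t) \<in> G\<^sup>* \<Longrightarrow> t \<in> P \<longleftrightarrow> t \<in> V M (n + 1)"
    by (auto simp: P_def intro: rtrancl_trans)
  have "sat (restrict_model M P) s \<phi>"
    using sat_restrict_model_tr(1)[OF M(1) convex R_G marked assms(1) \<open>s \<in> P\<close>] \<phi>' by simp
  moreover have "is_model (restrict_model M P)"
    using \<open>s \<in> P\<close> by (intro is_model_restrict_model) auto
  ultimately show ?thesis
    unfolding satisfiable_def using \<open>s \<in> P\<close> by (metis restrict_model_simps(1))
qed

theorem lemma1:
  fixes \<phi> :: fm and n l :: nat
  assumes "vars \<phi> \<subseteq> {1..n}" and "atoms \<phi> \<subseteq> {1..l}" and "l \<ge> 1"
  shows "satisfiable TYPE('s) \<phi> \<longleftrightarrow> satisfiable TYPE('s) (hat n l \<phi>)"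
  using satisfiable_hat_if_satisfiable[OF assms(1)]
    satisfiable_if_satisfiable_hat[OF assms(2,3)] by blast

end
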